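(* Let $(X,*,0)$ be a KU-algebra, let $d: X \to X$ be a self map, and let $\mu, \beta: X \to [0,1]$ be fuzzy left derivations KU-ideals of $X$ (with respect to $d$). Then the Cartesian product $\mu \times \beta: X \times X \to [0,1]$, $(\mu\times\beta)(x,y) = \min\{\mu(x), \beta(y)\}$, is a fuzzy left derivations KU-ideal of the KU-algebra $X \times X$ with respect to the self map $D(x,y) = (d(x), d(y))$.
   Context: A KU-algebra is a set $X$ with a binary operation $*$ and a constant $0$ such that for all $x,y,z \in X$: (KU1) $(x*y)*[(y*z)*(x*z)] = 0$; (KU2) $x*0 = 0$; (KU3) $0*x = x$; (KU4) $x*y = 0 = y*x$ implies $x = y$. The product $X \times X$ is a KU-algebra with operation $(x,y)*(u,v) = (x*u, y*v)$ and constant $(0,0)$. Given a KU-algebra $Y$ with constant $0_Y$ and a self map $D: Y \to Y$, a fuzzy set $\nu: Y \to [0,1]$ is a fuzzy left derivations KU-ideal of $Y$ if (F1) $\nu(0_Y) \ge \nu(a)$ for all $a \in Y$, and (FL2) $\nu(D(a*c)) \ge \min\{\nu(D(a)*(b*c)), \nu(D(b))\}$ for all $a,b,c \in Y$. The paper writes $d(x,y)$ for the self map of $X\times X$ induced by $d$, i.e. $(d(x),d(y))$. *)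

theory Defs
  imports Complex_Main
begin

definition ku_algebra :: "'a set \<Rightarrow> ('a \<Rightarrow> 'a \<Rightarrow> 'a) \<Rightarrow> 'a \<Rightarrow> bool" where
  "ku_algebra X f z \<longleftrightarrow>
     z \<in> X \<and> (\<forall>x\<in>X. \<forall>y\<in>X. f x y \<in> X) \<and>
     (\<forall>x\<in>X. \<forall>y\<in>X. \<forall>w\<in>X. f (f x y) (f (f y w) (f x w)) = z) \<and>
     (\<forall>x\<in>X. f x z = z) \<and>
     (\<forall>x\<in>X. f z x = x) \<and>
     (\<forall>x\<in>X. \<forall>y\<in>X. f x y = z \<and> f y x = z \<longrightarrow> x = y)"

definition prod_op :: "('a \<Rightarrow> 'a \<Rightarrow> 'a) \<Rightarrow> ('a \<times> 'a) \<Rightarrow> ('a \<times> 'a) \<Rightarrow> ('a \<times> 'a)" where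
  "prod_op f p q = (f (fst p) (fst q), f (snd p) (snd q))"

definition fuzzy_left_derivations_ku_ideal ::
  "'a set \<Rightarrow> ('a \<Rightarrow> 'a \<Rightarrow> 'a) \<Rightarrow> 'a \<Rightarrow> ('a \<Rightarrow> 'a) \<Rightarrow> ('a \<Rightarrow> real) \<Rightarrow> bool" where
  "fuzzy_left_derivations_ku_ideal Y f z D \<nu> \<longleftrightarrow>
     (\<forall>a\<in>Y. 0 \<le> \<nu> a \<and> \<nu> a \<le> 1) \<and>
     (\<forall>a\<in>Y. \<nu> z \<ge> \<nu> a) \<and>
     (\<forall>a\<in>Y. \<forall>b\<in>Y. \<forall>c\<in>Y. \<nu> (D (f a c)) \<ge> min (\<nu> (f (D a) (f b c))) (\<nu> (D b)))"

end

theory Submission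
  imports Defs
begin

text \<open>Each defining condition of the product splits into the same condition on the two
  components, glued together by monotonicity of \<open>min\<close>. No KU-algebra axiom is needed.\<close>

lemma min_min_mono:
  fixes a b p q r s :: real
  assumes "a \<ge> min p q" and "b \<ge> min r s"
  shows "min a b \<ge> min (min p r) (min q s)"
  using assms by linarith

lemma fuzzy_left_derivations_ku_ideal_prod:
  fixes X :: "'a set" and f :: "'a \<Rightarrow> 'a \<Rightarrow> 'a" and z :: 'a
    and d :: "'a \<Rightarrow> 'a" and \<mu> \<beta> :: "'a \<Rightarrow> real"
  assumes \<mu>: "fuzzy_left_derivations_ku_ideal X f z d \<mu>"
    and \<beta>: "fuzzy_left_derivations_ku_ideal X f z d \<beta>"
  shows "fuzzy_left_derivations_ku_ideal (X \<times> X) (prod_op f) (z, z)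
           (\<lambda>(x, y). (d x, d y)) (\<lambda>(x, y). min (\<mu> x) (\<beta> y))"
proof -
  have bounds: "0 \<le> min (\<mu> x) (\<beta> y) \<and> min (\<mu> x) (\<beta> y) \<le> 1" if "x \<in> X" "y \<in> X" for x y
    using \<mu> \<beta> that by (auto simp: fuzzy_left_derivations_ku_ideal_def)
  have zero_max: "min (\<mu> x) (\<beta> y) \<le> min (\<mu> z) (\<beta> z)" if "x \<in> X" "y \<in> X" for x y
    using \<mu> \<beta> that by (simp add: fuzzy_left_derivations_ku_ideal_def min.coboundedI1 min.coboundedI2)
  have derivation: "min (\<mu> (d (f a1 c1))) (\<beta> (d (f a2 c2))) \<ge>
      min (min (\<mu> (f (d a1) (f b1 c1))) (\<beta> (f (d a2) (f b2 c2)))) (min (\<mu> (d b1)) (\<beta> (d b2)))"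
    if "a1 \<in> X" "b1 \<in> X" "c1 \<in> X" "a2 \<in> X" "b2 \<in> X" "c2 \<in> X" for a1 b1 c1 a2 b2 c2
    using \<mu> \<beta> that by (intro min_min_mono) (simp_all add: fuzzy_left_derivations_ku_ideal_def)
  show ?thesis
    unfolding fuzzy_left_derivations_ku_ideal_def
    using bounds zero_max derivation by (auto simp: prod_op_def)
qed

theorem theorem5p12:
  fixes X :: "'a set" and f :: "'a \<Rightarrow> 'a \<Rightarrow> 'a" and z :: 'a
    and d :: "'a \<Rightarrow> 'a" and \<mu> \<beta> :: "'a \<Rightarrow> real"
  assumes "ku_algebra X f z"
    and "\<forall>x\<in>X. d x \<in> X"
    and "fuzzy_left_derivations_ku_ideal X f z d \<mu>"
    and "fuzzy_left_derivations_ku_ideal X f z d \<beta>"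
  shows "fuzzy_left_derivations_ku_ideal (X \<times> X) (prod_op f) (z, z)
           (\<lambda>(x, y). (d x, d y)) (\<lambda>(x, y). min (\<mu> x) (\<beta> y))"
  using fuzzy_left_derivations_ku_ideal_prod assms(3,4) .

end
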